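(* Let $G$ be a connected $\{K_4,K_{2,3},F_1,F_2\}$-induced-minor-free graph. Then $G$ has at most one hole.
   Context: A hole is an induced cycle of length at least $4$. $H$ is an induced minor of $G$ if $H$ can be obtained from $G$ by vertex deletions and edge contractions; $\mathcal F$-induced-minor-free means no member of $\mathcal F$ is an induced minor. $F_1$ is the graph consisting of two $4$-cycles sharing exactly one edge ($C_6$ plus a chord joining two antipodal vertices); $F_2$ is the graph consisting of two $4$-cycles sharing exactly one vertex. *)

theory Defs
  imports Main
begin

definition graph :: "'a set \<Rightarrow> 'a set set \<Rightarrow> bool" where
  "graph V E \<longleftrightarrow> finite V \<and> (\<forall>e\<in>E. e \<subseteq> V \<and> card e = 2)"

definition induced_edges :: "'a set set \<Rightarrow> 'a set \<Rightarrow> 'a set set" where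
  "induced_edges E S = {e\<in>E. e \<subseteq> S}"

definition connected_graph :: "'a set \<Rightarrow> 'a set set \<Rightarrow> bool" where
  "connected_graph V E \<longleftrightarrow> V \<noteq> {} \<and>
     (\<forall>u\<in>V. \<forall>v\<in>V. (u, v) \<in> {(x, y). {x, y} \<in> E \<and> x \<in> V \<and> y \<in> V}\<^sup>*)"

definition degree :: "'a set set \<Rightarrow> 'a \<Rightarrow> nat" where
  "degree E v = card {u. {u, v} \<in> E}"

definition cycle_graph :: "'a set \<Rightarrow> 'a set set \<Rightarrow> bool" where
  "cycle_graph V E \<longleftrightarrow> card V \<ge> 3 \<and> connected_graph V E \<and> (\<forall>v\<in>V. degree E v = 2)"

definition hole :: "'a set \<Rightarrow> 'a set set \<Rightarrow> 'a set \<Rightarrow> bool" where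
  "hole V E C \<longleftrightarrow> C \<subseteq> V \<and> card C \<ge> 4 \<and> cycle_graph C (induced_edges E C)"

text \<open>H = (VH, EH) is an induced minor of G = (V, E): there is a model by pairwise disjoint,
  nonempty, connected branch sets, with branch sets adjacent exactly for edges of H
  (equivalent to obtainability by vertex deletions and edge contractions).\<close>
definition induced_minor :: "'b set \<Rightarrow> 'b set set \<Rightarrow> 'a set \<Rightarrow> 'a set set \<Rightarrow> bool" where
  "induced_minor VH EH V E \<longleftrightarrow> (\<exists>f :: 'b \<Rightarrow> 'a set.
     (\<forall>h\<in>VH. f h \<noteq> {} \<and> f h \<subseteq> V \<and> connected_graph (f h) (induced_edges E (f h))) \<and>
     (\<forall>h\<in>VH. \<forall>h'\<in>VH. h \<noteq> h' \<longrightarrow> f h \<inter> f h' = {}) \<and>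
     (\<forall>h\<in>VH. \<forall>h'\<in>VH. h \<noteq> h' \<longrightarrow>
        ({h, h'} \<in> EH \<longleftrightarrow> (\<exists>x\<in>f h. \<exists>y\<in>f h'. {x, y} \<in> E))))"

definition K4_V :: "nat set" where "K4_V = {0,1,2,3}"
definition K4_E :: "nat set set" where "K4_E = {{x,y} | x y. x \<in> K4_V \<and> y \<in> K4_V \<and> x \<noteq> y}"

definition K23_V :: "nat set" where "K23_V = {0,1,2,3,4}"
definition K23_E :: "nat set set" where "K23_E = {{x,y} | x y. x \<in> {0,1} \<and> y \<in> {2,3,4}}"

text \<open>F1: C6 on 0..5 plus the chord 0--3 (two 4-cycles sharing the edge 0--3).\<close>
definition F1_V :: "nat set" where "F1_V = {0,1,2,3,4,5}"
definition F1_E :: "nat set set" where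
  "F1_E = {{0,1},{1,2},{2,3},{3,4},{4,5},{5,0},{0,3}}"

text \<open>F2: two 4-cycles 0-1-2-3-0 and 0-4-5-6-0 sharing exactly the vertex 0.\<close>
definition F2_V :: "nat set" where "F2_V = {0,1,2,3,4,5,6}"
definition F2_E :: "nat set set" where
  "F2_E = {{0,1},{1,2},{2,3},{3,0},{0,4},{4,5},{5,6},{6,0}}"

end

theory Submission
  imports Defs
begin

(* A connected set Q disjoint from a hole C has at most two neighbours on C, since three of them
   split C into arcs that together with Q model K4; and two such neighbours are adjacent, since
   otherwise Q and the two arcs between them model K2,3.
   Now let C1 and C2 be distinct holes. If they meet and C2 is not inside C1, follow C2 from a
   vertex x of C1 \<inter> C2 into C2 - C1: the first vertex where the walk comes back to C1 is a
   neighbour of x, so C1 \<inter> C2 is a single vertex or a single edge. Two holes sharing just an edge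
   model F1; two holes sharing just a vertex model F2, or F1 if an edge joins them away from that
   vertex. Disjoint holes joined by an edge or, using connectivity, by a path model F2 after
   contracting the connection, unless the edges between them give K4 or close a 4-hole that
   shares an edge with C1. *)

lemma connected_graph_cut_edge:
  assumes "connected_graph W F" "T \<subseteq> W" "t \<in> T" "v \<in> W - T"
  shows "\<exists>x\<in>T. \<exists>y\<in>W - T. {x, y} \<in> F"
proof -
  have "(t, v) \<in> {(x, y). {x, y} \<in> F \<and> x \<in> W \<and> y \<in> W}\<^sup>*"
    using assms unfolding connected_graph_def by blast
  then have "v \<in> T \<or> (\<exists>x\<in>T. \<exists>y\<in>W - T. {x, y} \<in> F)"
    by (induction rule: rtrancl_induct) (use assms in auto)
  then show ?thesis using assms by blast
qed

locale simple_graph =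
  fixes V :: "'a set" and E :: "'a set set"
  assumes graph: "graph V E"
begin

definition adj :: "'a \<Rightarrow> 'a \<Rightarrow> bool" where
  "adj x y \<longleftrightarrow> {x, y} \<in> E"

lemma adj_sym: "adj x y \<longleftrightarrow> adj y x"
  unfolding adj_def by (simp add: insert_commute)

lemma adj_irrefl [simp]: "\<not> adj x x"
  using graph unfolding adj_def graph_def by fastforce

definition adjacent :: "'a set \<Rightarrow> 'a set \<Rightarrow> bool" where
  "adjacent A B \<longleftrightarrow> (\<exists>x\<in>A. \<exists>y\<in>B. adj x y)"

lemma adjacent_sym: "adjacent A B \<longleftrightarrow> adjacent B A"
  unfolding adjacent_def using adj_sym by blast

lemma adjacentI: "adj x y \<Longrightarrow> x \<in> A \<Longrightarrow> y \<in> B \<Longrightarrow> adjacent A B"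
  unfolding adjacent_def by blast

lemma adjacent_mono: "adjacent A B \<Longrightarrow> A \<subseteq> A' \<Longrightarrow> B \<subseteq> B' \<Longrightarrow> adjacent A' B'"
  unfolding adjacent_def by blast

lemma adjacent_singleton_left: "adjacent {a} B \<longleftrightarrow> (\<exists>b\<in>B. adj a b)"
  unfolding adjacent_def by simp

lemma adjacent_singletons [simp]: "adjacent {a} {b} \<longleftrightarrow> adj a b"
  unfolding adjacent_def by simp

definition adj_within :: "'a set \<Rightarrow> ('a \<times> 'a) set" where
  "adj_within S = {(x, y). adj x y \<and> x \<in> S \<and> y \<in> S}"

lemma sym_adj_within: "sym ((adj_within S)\<^sup>*)"
  by (rule sym_rtrancl) (auto simp: sym_def adj_within_def adj_sym)

lemma adj_within_mono: "S \<subseteq> T \<Longrightarrow> (x, y) \<in> (adj_within S)\<^sup>* \<Longrightarrow> (x, y) \<in> (adj_within T)\<^sup>*"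
  using rtrancl_mono[of "adj_within S" "adj_within T"] unfolding adj_within_def by blast

definition connected_set :: "'a set \<Rightarrow> bool" where
  "connected_set S \<longleftrightarrow> connected_graph S (induced_edges E S)"

lemma connected_set_iff:
  "connected_set S \<longleftrightarrow> S \<noteq> {} \<and> (\<forall>u\<in>S. \<forall>v\<in>S. (u, v) \<in> (adj_within S)\<^sup>*)"
proof -
  have "{(x, y). {x, y} \<in> induced_edges E S \<and> x \<in> S \<and> y \<in> S} = adj_within S"
    unfolding adj_within_def induced_edges_def adj_def by auto
  then show ?thesis unfolding connected_set_def connected_graph_def by simp
qed

lemma connected_set_nonempty: "connected_set S \<Longrightarrow> S \<noteq> {}"
  unfolding connected_set_iff by blast

lemma connected_setI:
  assumes "s \<in> S" "\<And>u. u \<in> S \<Longrightarrow> (s, u) \<in> (adj_within S)\<^sup>*"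
  shows "connected_set S"
proof -
  have "(u, v) \<in> (adj_within S)\<^sup>*" if "u \<in> S" "v \<in> S" for u v
  proof -
    have "(u, s) \<in> (adj_within S)\<^sup>*"
      using assms that sym_adj_within[of S] by (blast dest: symD)
    then show ?thesis using assms(2)[OF that(2)] by (rule rtrancl_trans)
  qed
  then show ?thesis unfolding connected_set_iff using assms(1) by blast
qed

lemma connected_set_singleton: "connected_set {x}"
  unfolding connected_set_iff by simp

lemma connected_set_Un:
  assumes A: "connected_set A" and B: "connected_set B" and AB: "adjacent A B"
  shows "connected_set (A \<union> B)"
proof -
  obtain a b where ab: "a \<in> A" "b \<in> B" "adj a b" using AB unfolding adjacent_def by blast
  let ?R = "(adj_within (A \<union> B))\<^sup>*"
  have "(a, u) \<in> ?R" if "u \<in> A" for u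
    using A ab(1) that adj_within_mono[of A "A \<union> B"] unfolding connected_set_iff by blast
  moreover have "(a, u) \<in> ?R" if "u \<in> B" for u
  proof -
    have "(a, b) \<in> ?R" using ab unfolding adj_within_def by auto
    moreover have "(b, u) \<in> ?R"
      using B ab(2) that adj_within_mono[of B "A \<union> B"] unfolding connected_set_iff by blast
    ultimately show ?thesis by (rule rtrancl_trans)
  qed
  ultimately show ?thesis using ab(1) by (intro connected_setI[of a]) auto
qed

lemma connected_set_edge: "adj x y \<Longrightarrow> connected_set {x, y}"
  using connected_set_Un[of "{x}" "{y}"] connected_set_singleton by (simp add: insert_commute)

definition induced_path :: "'a list \<Rightarrow> bool" where
  "induced_path p \<longleftrightarrow> distinct p \<and>
     (\<forall>i<length p. \<forall>j<length p. adj (p!i) (p!j) \<longleftrightarrow> i = Suc j \<or> j = Suc i)"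

lemma induced_path_adj:
  "induced_path p \<Longrightarrow> i < length p \<Longrightarrow> j < length p \<Longrightarrow> adj (p!i) (p!j) \<longleftrightarrow> i = Suc j \<or> j = Suc i"
  unfolding induced_path_def by blast

lemma induced_path_nth_eq:
  "induced_path p \<Longrightarrow> i < length p \<Longrightarrow> j < length p \<Longrightarrow> p!i = p!j \<longleftrightarrow> i = j"
  unfolding induced_path_def using nth_eq_iff_index_eq by blast

lemma induced_path_tl: "induced_path p \<Longrightarrow> induced_path (tl p)"
  unfolding induced_path_def by (simp add: distinct_tl nth_tl)

definition segment :: "'a list \<Rightarrow> nat \<Rightarrow> nat \<Rightarrow> 'a set" where
  "segment p i j = (!) p ` {i..<j}"

lemma segment_nth: "i \<le> k \<Longrightarrow> k < j \<Longrightarrow> p!k \<in> segment p i j"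
  unfolding segment_def by simp

lemma segment_singleton: "segment p i (Suc i) = {p!i}"
  unfolding segment_def by simp

lemma segment_subset: "j \<le> length p \<Longrightarrow> segment p i j \<subseteq> set p"
  unfolding segment_def by auto

lemma segment_all: "segment p 0 (length p) = set p"
  unfolding segment_def by (auto simp: in_set_conv_nth)

lemma segment_nonempty: "i < j \<Longrightarrow> segment p i j \<noteq> {}"
  unfolding segment_def by simp

lemma connected_segment:
  assumes "induced_path p" "i < j" "j \<le> length p"
  shows "connected_set (segment p i j)"
  using assms(2,3)
proof (induction j)
  case (Suc j)
  show ?case
  proof (cases "i = j")
    case False
    then have "adjacent (segment p i j) {p!j}"
      using Suc.prems induced_path_adj[OF assms(1), of "j - 1" j]
      by (intro adjacentI[of "p!(j - 1)"]) (auto intro: segment_nth)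
    then have "connected_set (segment p i j \<union> {p!j})"
      using Suc False by (intro connected_set_Un connected_set_singleton) auto
    moreover have "segment p i (Suc j) = segment p i j \<union> {p!j}"
      using Suc.prems unfolding segment_def by (auto simp: less_Suc_eq)
    ultimately show ?thesis by simp
  qed (simp add: segment_singleton connected_set_singleton)
qed simp

lemma connected_set_path: "induced_path p \<Longrightarrow> p \<noteq> [] \<Longrightarrow> connected_set (set p)"
  using connected_segment[of p 0 "length p"] by (simp add: segment_all)

lemma segment_branch_set:
  assumes "induced_path p" "set p \<subseteq> V" "i < j" "j \<le> length p"
  shows "segment p i j \<noteq> {}" "segment p i j \<subseteq> set p" "segment p i j \<subseteq> V"
    "connected_set (segment p i j)"
  using assms segment_nonempty segment_subset connected_segment by blast+

lemma segments_disjoint: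
  assumes "induced_path p" "j \<le> k" "l \<le> length p"
  shows "segment p i j \<inter> segment p k l = {}"
proof -
  have "p!m \<noteq> p!m'" if "m < j" "k \<le> m'" "m' < l" for m m'
    using that assms induced_path_nth_eq[OF assms(1), of m m'] by auto
  then show ?thesis unfolding segment_def by auto
qed

lemma segments_not_adjacent:
  assumes "induced_path p" "j < k" "l \<le> length p"
  shows "\<not> adjacent (segment p i j) (segment p k l)"
proof -
  have "\<not> adj (p!m) (p!m')" if "m < j" "k \<le> m'" "m' < l" for m m'
    using that assms induced_path_adj[OF assms(1), of m m'] by auto
  then show ?thesis unfolding segment_def adjacent_def by auto
qed

lemma consecutive_segments_adjacent:
  assumes "induced_path p" "i < j" "j < k" "k \<le> length p"
  shows "adjacent (segment p i j) (segment p j k)"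
  using assms induced_path_adj[OF assms(1), of "j - 1" j]
  by (intro adjacentI[of "p!(j - 1)" "p!j"]) (auto intro: segment_nth)

lemma segment_not_adjacent:
  "(\<And>k. i \<le> k \<Longrightarrow> k < j \<Longrightarrow> \<not> adjacent {p!k} Z) \<Longrightarrow> \<not> adjacent (segment p i j) Z"
  unfolding segment_def adjacent_def by (auto simp: Bex_def)

lemma segment_adjacent: "adjacent {p!k} Z \<Longrightarrow> i \<le> k \<Longrightarrow> k < j \<Longrightarrow> adjacent (segment p i j) Z"
  by (erule adjacent_mono) (auto intro: segment_nth)

lemma maximal_path_extension:
  assumes "finite C" "set ys \<subseteq> C" "distinct ys" "successively adj ys"
  shows "\<exists>zs. set (ys @ zs) \<subseteq> C \<and> distinct (ys @ zs) \<and> successively adj (ys @ zs) \<and>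
           (\<forall>y\<in>C. adj (last (ys @ zs)) y \<longrightarrow> y \<in> set (ys @ zs))"
  using assms(2-)
proof (induction "card C - length ys" arbitrary: ys rule: less_induct)
  case less
  show ?case
  proof (cases "\<exists>y\<in>C. adj (last ys) y \<and> y \<notin> set ys")
    case True
    then obtain y where y: "y \<in> C" "adj (last ys) y" "y \<notin> set ys" by blast
    have "length ys = card (set ys)" using less.prems(2) by (simp add: distinct_card)
    moreover have "card (set ys) < card C"
      using less.prems(1) y(1,3) assms(1) by (intro psubset_card_mono) auto
    ultimately have "card C - length (ys @ [y]) < card C - length ys" by simp
    moreover have "successively adj (ys @ [y])"
      using less.prems(3) y(2) by (cases "ys = []") (auto simp: successively_append_iff)
    moreover have "set (ys @ [y]) \<subseteq> C" "distinct (ys @ [y])" using less.prems y by auto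
    ultimately show ?thesis using less.hyps[of "ys @ [y]"]
      by (metis append.assoc append_Cons append_Nil)
  next
    case False
    then show ?thesis using less.prems by (intro exI[of _ "[]"]) auto
  qed
qed

lemma hole_subset: "hole V E C \<Longrightarrow> C \<subseteq> V"
  unfolding hole_def by blast

lemma hole_finite: "hole V E C \<Longrightarrow> finite C"
  using graph finite_subset hole_subset unfolding graph_def by blast

lemma hole_card: "hole V E C \<Longrightarrow> 4 \<le> card C"
  unfolding hole_def by blast

lemma connected_hole: "hole V E C \<Longrightarrow> connected_set C"
  unfolding hole_def cycle_graph_def connected_set_def by blast

lemma hole_neighbours_card:
  assumes "hole V E C" "x \<in> C"
  shows "card {u\<in>C. adj u x} = 2"
proof -
  have "{u. {u, x} \<in> induced_edges E C} = {u\<in>C. adj u x}"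
    using assms(2) unfolding induced_edges_def adj_def by auto
  then show ?thesis using assms unfolding hole_def cycle_graph_def degree_def by auto
qed

lemma hole_neighbours_eq:
  assumes H: "hole V E C" and "x \<in> C" "a \<in> C" "b \<in> C" "a \<noteq> b" "adj a x" "adj b x"
  shows "{u\<in>C. adj u x} = {a, b}"
proof -
  have "finite {u\<in>C. adj u x}" using hole_finite[OF H] by simp
  moreover have "{a, b} \<subseteq> {u\<in>C. adj u x}" using assms by auto
  moreover have "card {a, b} = card {u\<in>C. adj u x}" using hole_neighbours_card[OF H \<open>x \<in> C\<close>] assms
    by simp
  ultimately show ?thesis using card_subset_eq by metis
qed

lemma hole_has_neighbour:
  assumes "hole V E C" "v \<in> C"
  obtains c where "c \<in> C" "adj v c"
proof -
  have "{u\<in>C. adj u v} \<noteq> {}" using hole_neighbours_card[OF assms] by fastforce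
  then show ?thesis using that adj_sym by blast
qed

lemma hole_maximal_path_closes:
  assumes H: "hole V E C"
    and xs: "set xs \<subseteq> C" "distinct xs" "successively adj xs" "2 \<le> length xs"
    and maximal: "\<forall>y\<in>C. adj (last xs) y \<longrightarrow> y \<in> set xs"
  shows "3 \<le> length xs" "adj (last xs) (hd xs)"
proof -
  define n where "n = length xs"
  have inC: "xs!i \<in> C" if "i < n" for i using xs(1) that unfolding n_def by auto
  have nth_eq: "xs!i = xs!j \<longleftrightarrow> i = j" if "i < n" "j < n" for i j
    using xs(2) that unfolding n_def by (simp add: nth_eq_iff_index_eq)
  have step: "adj (xs!i) (xs!Suc i)" if "Suc i < n" for i
    using successively_nth[OF xs(3)] that unfolding n_def by blast
  have "xs \<noteq> []" using xs(4) by auto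
  then have last: "last xs = xs!(n - 1)" and hd: "hd xs = xs!0"
    unfolding n_def by (simp_all add: last_conv_nth hd_conv_nth)
  have "card {u\<in>C. adj u (xs!(n - 1))} = 2"
    using hole_neighbours_card[OF H inC] xs(4) unfolding n_def by simp
  moreover have "xs!(n - 2) \<in> {u\<in>C. adj u (xs!(n - 1))}"
  proof -
    have "Suc (n - 2) = n - 1" "Suc (n - 2) < n" using xs(4) unfolding n_def by auto
    then show ?thesis using step[of "n - 2"] inC[of "n - 2"] by simp
  qed
  ultimately obtain y where y: "y \<in> C" "adj y (xs!(n - 1))" "y \<noteq> xs!(n - 2)"
    by (metis (no_types, lifting) card_2_iff' mem_Collect_eq)
  then obtain j where j: "j < n" "xs!j = y"
    using maximal last adj_sym unfolding n_def by (metis in_set_conv_nth)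
  have "j \<noteq> n - 1" "j \<noteq> n - 2" using j y by auto
  then have jn: "j < n - 2" using j(1) by linarith
  \<comment> \<open>an inner vertex of the path already has both of its neighbours on the path\<close>
  have "j = 0"
  proof (rule ccontr)
    assume "j \<noteq> 0"
    then have "{u\<in>C. adj u (xs!j)} = {xs!(j - 1), xs!Suc j}"
      using jn inC nth_eq step[of "j - 1"] step[of j] adj_sym
      by (intro hole_neighbours_eq[OF H]) auto
    moreover have "xs!(n - 1) \<in> {u\<in>C. adj u (xs!j)}" using y j inC jn adj_sym by auto
    ultimately show False using nth_eq jn \<open>j \<noteq> 0\<close> by auto
  qed
  then show "3 \<le> length xs" "adj (last xs) (hd xs)"
    using jn j y last hd adj_sym unfolding n_def by auto
qed

lemma hole_cycle_neighbours:
  assumes H: "hole V E C"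
    and xs: "set xs \<subseteq> C" "distinct xs" "successively adj xs" "3 \<le> length xs" "adj (last xs) (hd xs)"
    and i: "i < length xs"
  shows "{u\<in>C. adj u (xs!i)} =
           {xs!(if i = 0 then length xs - 1 else i - 1),
            xs!(if i = length xs - 1 then 0 else Suc i)}"
proof -
  let ?n = "length xs"
  let ?pred = "if i = 0 then ?n - 1 else i - 1" and ?succ = "if i = ?n - 1 then 0 else Suc i"
  have idx: "?pred < ?n" "?succ < ?n" "?pred \<noteq> ?succ" using xs(4) i by auto
  have step: "adj (xs!k) (xs!Suc k)" if "Suc k < ?n" for k
    using successively_nth[OF xs(3)] that by blast
  have "xs \<noteq> []" using xs(4) by auto
  then have close: "adj (xs!(?n - 1)) (xs!0)"
    using xs(5) by (simp add: last_conv_nth hd_conv_nth)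
  show ?thesis
  proof (rule hole_neighbours_eq[OF H])
    show "adj (xs!?pred) (xs!i)" using close step[of "i - 1"] i by auto
    show "adj (xs!?succ) (xs!i)" using close step[of i] i adj_sym by auto
    show "xs!?pred \<noteq> xs!?succ" using idx nth_eq_iff_index_eq[OF xs(2)] by blast
  qed (use xs(1) idx i in auto)
qed

lemma hole_cycle_covers:
  assumes H: "hole V E C"
    and xs: "set xs \<subseteq> C" "distinct xs" "successively adj xs" "3 \<le> length xs" "adj (last xs) (hd xs)"
  shows "set xs = C"
proof
  have len: "0 < length xs" "length xs - 1 < length xs" using xs(4) by linarith+
  show "C \<subseteq> set xs"
  proof
    fix z assume "z \<in> C"
    moreover have "xs!0 \<in> C" using xs(1) nth_mem[OF len(1)] by blast
    ultimately have "(xs!0, z) \<in> (adj_within C)\<^sup>*"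
      using connected_hole[OF H] unfolding connected_set_iff by blast
    then show "z \<in> set xs"
    proof (induction rule: rtrancl_induct)
      case (step a b)
      then obtain i where i: "i < length xs" "xs!i = a" by (auto simp: in_set_conv_nth)
      have "b \<in> {u\<in>C. adj u (xs!i)}" using step(2) i adj_sym unfolding adj_within_def by auto
      then show ?case
        unfolding hole_cycle_neighbours[OF H xs i(1)] using i(1) len by auto
    qed (use len in simp)
  qed
qed (rule xs(1))

lemma hole_cyclic_order:
  assumes H: "hole V E C" and v: "v \<in> C" and c: "c \<in> C" "adj v c"
  obtains xs where "set xs = C" "distinct xs" "xs!0 = v" "xs!1 = c" "4 \<le> length xs"
    "\<And>i j. i < length xs \<Longrightarrow> j < length xs \<Longrightarrow> adj (xs!i) (xs!j) \<longleftrightarrow>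
       j = (if i = 0 then length xs - 1 else i - 1) \<or> j = (if i = length xs - 1 then 0 else Suc i)"
proof -
  have "set [v, c] \<subseteq> C" "distinct [v, c]" "successively adj [v, c]" using v c by auto
  then obtain zs where xs: "set ([v, c] @ zs) \<subseteq> C" "distinct ([v, c] @ zs)"
      "successively adj ([v, c] @ zs)"
      and maximal: "\<forall>y\<in>C. adj (last ([v, c] @ zs)) y \<longrightarrow> y \<in> set ([v, c] @ zs)"
    using maximal_path_extension[OF hole_finite[OF H]] by blast
  define xs where "xs = [v, c] @ zs"
  note xs = xs[folded xs_def] and maximal = maximal[folded xs_def]
  have closed: "3 \<le> length xs" "adj (last xs) (hd xs)"
    using hole_maximal_path_closes[OF H xs _ maximal] unfolding xs_def by auto
  let ?n = "length xs"
  have cover: "set xs = C" using hole_cycle_covers[OF H xs(1-3) closed] .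
  then have "4 \<le> ?n" using hole_card[OF H] distinct_card[OF xs(2)] by simp
  moreover have "adj (xs!i) (xs!j) \<longleftrightarrow>
      j = (if i = 0 then ?n - 1 else i - 1) \<or> j = (if i = ?n - 1 then 0 else Suc i)"
    if ij: "i < ?n" "j < ?n" for i j
  proof -
    let ?pred = "if i = 0 then ?n - 1 else i - 1" and ?succ = "if i = ?n - 1 then 0 else Suc i"
    have idx: "?pred < ?n" "?succ < ?n" using ij by auto
    have "adj (xs!i) (xs!j) \<longleftrightarrow> xs!j \<in> {u\<in>C. adj u (xs!i)}"
      using ij xs(1) adj_sym by auto
    also have "\<dots> \<longleftrightarrow> xs!j = xs!?pred \<or> xs!j = xs!?succ"
      unfolding hole_cycle_neighbours[OF H xs(1-3) closed ij(1)] by blast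
    also have "\<dots> \<longleftrightarrow> j = ?pred \<or> j = ?succ"
      using ij idx nth_eq_iff_index_eq[OF xs(2)] by blast
    finally show ?thesis .
  qed
  ultimately show ?thesis using that[OF cover xs(2)] unfolding xs_def by simp
qed

lemma hole_minus_vertex_path_from:
  assumes H: "hole V E C" and v: "v \<in> C" and c: "c \<in> C" "adj v c"
  obtains p where "induced_path p" "set p = C - {v}" "3 \<le> length p" "p!0 = c"
    "\<forall>k<length p. adj v (p!k) \<longleftrightarrow> k = 0 \<or> k = length p - 1"
proof -
  obtain xs where xs: "set xs = C" "distinct xs" "xs!0 = v" "xs!1 = c" "4 \<le> length xs"
    and adj_iff: "\<And>i j. i < length xs \<Longrightarrow> j < length xs \<Longrightarrow> adj (xs!i) (xs!j) \<longleftrightarrow>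
       j = (if i = 0 then length xs - 1 else i - 1) \<or> j = (if i = length xs - 1 then 0 else Suc i)"
    using hole_cyclic_order[OF assms] by blast
  have "xs \<noteq> []" "xs = v # tl xs" using xs(3,5) by (cases xs; auto)+
  show ?thesis
  proof
    show "induced_path (tl xs)"
      unfolding induced_path_def using xs(2) adj_iff by (auto simp: distinct_tl nth_tl)
    show "\<forall>k<length (tl xs). adj v (tl xs!k) \<longleftrightarrow> k = 0 \<or> k = length (tl xs) - 1"
    proof (intro allI impI)
      fix k assume "k < length (tl xs)"
      then show "adj v (tl xs!k) \<longleftrightarrow> k = 0 \<or> k = length (tl xs) - 1"
        using adj_iff[of 0 "Suc k"] xs(3,5) \<open>xs \<noteq> []\<close> by (auto simp: nth_tl)
    qed
    show "set (tl xs) = C - {v}"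
      using xs(1,2) \<open>xs = v # tl xs\<close> by (metis Diff_insert_absorb distinct.simps(2) list.simps(15))
  qed (use xs in \<open>auto simp: nth_tl\<close>)
qed

lemma hole_minus_edge_path:
  assumes H: "hole V E C" and "v \<in> C" "c \<in> C" "adj v c"
  obtains A where "induced_path A" "set A = C - {v, c}" "2 \<le> length A"
    "\<forall>k<length A. adj v (A!k) \<longleftrightarrow> k = length A - 1" "\<forall>k<length A. adj c (A!k) \<longleftrightarrow> k = 0"
proof -
  obtain p where p: "induced_path p" "set p = C - {v}" "3 \<le> length p" "p!0 = c"
      and ends: "\<forall>k<length p. adj v (p!k) \<longleftrightarrow> k = 0 \<or> k = length p - 1"
    using hole_minus_vertex_path_from[OF assms] .
  note len = p(3)
  then have "p \<noteq> []" by auto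
  have "distinct p" using p(1) unfolding induced_path_def by blast
  then have "set (tl p) = set p - {c}" using len p(4) by (cases p) auto
  show ?thesis
  proof
    show "induced_path (tl p)" using induced_path_tl[OF p(1)] .
    show "set (tl p) = C - {v, c}" using \<open>set (tl p) = set p - {c}\<close> p(2) by auto
    show "\<forall>k<length (tl p). adj v (tl p!k) \<longleftrightarrow> k = length (tl p) - 1"
      using ends len by (auto simp: nth_tl)
    show "\<forall>k<length (tl p). adj c (tl p!k) \<longleftrightarrow> k = 0"
      using induced_path_adj[OF p(1), of 0] \<open>p \<noteq> []\<close> p(4) len by (auto simp: nth_tl)
  qed (use len in simp)
qed

lemma hole_minus_vertex_path:
  assumes "hole V E C" "v \<in> C"
  obtains p where "induced_path p" "set p = C - {v}" "3 \<le> length p"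
    "\<forall>k<length p. adj v (p!k) \<longleftrightarrow> k = 0 \<or> k = length p - 1"
proof -
  obtain c where "c \<in> C" "adj v c" using hole_has_neighbour[OF assms] .
  then show ?thesis using hole_minus_vertex_path_from[OF assms] that by metis
qed

lemma connected_hole_minus_vertex:
  assumes "hole V E C" "v \<in> C"
  shows "connected_set (C - {v})"
proof -
  obtain p where p: "induced_path p" "set p = C - {v}" "3 \<le> length p"
    using hole_minus_vertex_path[OF assms] by metis
  have "p \<noteq> []" using p(3) by auto
  then show ?thesis using connected_set_path[OF p(1)] p(2) by simp
qed

fun branch_sets :: "'a set list \<Rightarrow> bool" where
  "branch_sets [] \<longleftrightarrow> True"
| "branch_sets (B # Bs) \<longleftrightarrow>
     B \<noteq> {} \<and> B \<subseteq> V \<and> connected_set B \<and> (\<forall>B'\<in>set Bs. B \<inter> B' = {}) \<and> branch_sets Bs"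

lemma branch_sets_nth:
  "branch_sets Bs \<Longrightarrow> i < length Bs \<Longrightarrow> Bs!i \<noteq> {} \<and> Bs!i \<subseteq> V \<and> connected_set (Bs!i)"
  by (induction Bs arbitrary: i) (auto simp: nth_Cons split: nat.splits)

lemma branch_sets_disjoint:
  "branch_sets Bs \<Longrightarrow> i < length Bs \<Longrightarrow> j < length Bs \<Longrightarrow> i \<noteq> j \<Longrightarrow> Bs!i \<inter> Bs!j = {}"
proof (induction Bs arbitrary: i j)
  case (Cons B Bs)
  then show ?case by (cases i; cases j) (auto simp: Int_commute)
qed simp

lemma induced_minor_of_branch_sets:
  assumes "branch_sets Bs"
    and "\<forall>i<length Bs. \<forall>j<length Bs. i \<noteq> j \<longrightarrow> ({i, j} \<in> EH \<longleftrightarrow> adjacent (Bs!i) (Bs!j))"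
  shows "induced_minor {..<length Bs} EH V E"
proof -
  have "\<forall>i<length Bs. Bs!i \<noteq> {} \<and> Bs!i \<subseteq> V \<and> connected_graph (Bs!i) (induced_edges E (Bs!i))"
    using branch_sets_nth[OF assms(1)] unfolding connected_set_def by blast
  moreover have "\<forall>i<length Bs. \<forall>j<length Bs. i \<noteq> j \<longrightarrow> Bs!i \<inter> Bs!j = {}"
    using branch_sets_disjoint[OF assms(1)] by blast
  ultimately show ?thesis
    using assms(2) unfolding induced_minor_def adjacent_def adj_def
    by (intro exI[of _ "(!) Bs"]) auto
qed

lemma K4_minorI:
  assumes "branch_sets [B0, B1, B2, B3]"
    and "adjacent B0 B1" "adjacent B0 B2" "adjacent B0 B3" "adjacent B1 B2" "adjacent B1 B3"
      "adjacent B2 B3"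
  shows "induced_minor K4_V K4_E V E"
proof -
  have "{i, j} \<in> K4_E \<longleftrightarrow> i \<in> K4_V \<and> j \<in> K4_V \<and> i \<noteq> j" for i j
    unfolding K4_E_def by (auto simp: doubleton_eq_iff)
  then have "induced_minor {..<length [B0, B1, B2, B3]} K4_E V E"
    using assms
    by (intro induced_minor_of_branch_sets) (auto simp: K4_V_def less_Suc_eq adjacent_sym)
  moreover have "{..<length [B0, B1, B2, B3]} = K4_V" unfolding K4_V_def by auto
  ultimately show ?thesis by simp
qed

lemma K23_minorI:
  assumes "branch_sets [B0, B1, B2, B3, B4]"
    and "adjacent B0 B2" "adjacent B0 B3" "adjacent B0 B4" "adjacent B1 B2" "adjacent B1 B3"
      "adjacent B1 B4"
    and "\<not> adjacent B0 B1" "\<not> adjacent B2 B3" "\<not> adjacent B2 B4" "\<not> adjacent B3 B4"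
  shows "induced_minor K23_V K23_E V E"
proof -
  have "{i, j} \<in> K23_E \<longleftrightarrow> (i \<in> {0, 1} \<and> j \<in> {2, 3, 4}) \<or> (j \<in> {0, 1} \<and> i \<in> {2, 3, 4})" for i j
    unfolding K23_E_def by (auto simp: doubleton_eq_iff)
  then have "induced_minor {..<length [B0, B1, B2, B3, B4]} K23_E V E"
    using assms by (intro induced_minor_of_branch_sets) (auto simp: less_Suc_eq adjacent_sym)
  moreover have "{..<length [B0, B1, B2, B3, B4]} = K23_V" unfolding K23_V_def by auto
  ultimately show ?thesis by simp
qed

lemma F1_minorI:
  assumes "branch_sets [B0, B1, B2, B3, B4, B5]"
    and "adjacent B0 B1" "adjacent B1 B2" "adjacent B2 B3" "adjacent B3 B4" "adjacent B4 B5"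
      "adjacent B5 B0" "adjacent B0 B3"
    and "\<not> adjacent B0 B2" "\<not> adjacent B0 B4" "\<not> adjacent B1 B3" "\<not> adjacent B1 B4"
      "\<not> adjacent B1 B5" "\<not> adjacent B2 B4" "\<not> adjacent B2 B5" "\<not> adjacent B3 B5"
  shows "induced_minor F1_V F1_E V E"
proof -
  have "induced_minor {..<length [B0, B1, B2, B3, B4, B5]} F1_E V E"
    using assms by (intro induced_minor_of_branch_sets)
      (auto simp: F1_E_def less_Suc_eq adjacent_sym doubleton_eq_iff)
  moreover have "{..<length [B0, B1, B2, B3, B4, B5]} = F1_V" unfolding F1_V_def by auto
  ultimately show ?thesis by simp
qed

lemma F2_minorI:
  assumes "branch_sets [B0, B1, B2, B3, B4, B5, B6]"
    and "adjacent B0 B1" "adjacent B1 B2" "adjacent B2 B3" "adjacent B3 B0" "adjacent B0 B4"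
      "adjacent B4 B5" "adjacent B5 B6" "adjacent B6 B0"
    and "\<not> adjacent B0 B2" "\<not> adjacent B0 B5" "\<not> adjacent B1 B3" "\<not> adjacent B1 B4"
      "\<not> adjacent B1 B5" "\<not> adjacent B1 B6" "\<not> adjacent B2 B4" "\<not> adjacent B2 B5"
      "\<not> adjacent B2 B6" "\<not> adjacent B3 B4" "\<not> adjacent B3 B5" "\<not> adjacent B3 B6"
      "\<not> adjacent B4 B6"
  shows "induced_minor F2_V F2_E V E"
proof -
  have "induced_minor {..<length [B0, B1, B2, B3, B4, B5, B6]} F2_E V E"
    using assms by (intro induced_minor_of_branch_sets)
      (auto simp: F2_E_def less_Suc_eq adjacent_sym doubleton_eq_iff)
  moreover have "{..<length [B0, B1, B2, B3, B4, B5, B6]} = F2_V" unfolding F2_V_def by auto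
  ultimately show ?thesis by simp
qed

lemma K4_minor_of_path_attachments:
  assumes p: "induced_path p" "set p \<subseteq> V" "j < length p"
    and x: "x \<in> V" "x \<notin> set p" "adj x (p!0)" "adj x (p!(length p - 1))"
    and Q: "Q \<subseteq> V" "connected_set Q" "Q \<inter> insert x (set p) = {}"
    and att: "i < j" "adjacent {x} Q" "adjacent {p!i} Q" "adjacent {p!j} Q"
  shows "induced_minor K4_V K4_E V E"
proof (rule K4_minorI)
  let ?n = "length p"
  have S: "segment p 0 j \<subseteq> set p" "segment p j ?n \<subseteq> set p" using segment_subset p(3) by auto
  show "branch_sets [Q, {x}, segment p 0 j, segment p j ?n]"
    using Q S p x att(1) connected_set_nonempty[OF Q(2)]
    by (auto simp: connected_set_singleton segment_nonempty connected_segment segments_disjoint)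
  show "adjacent Q {x}" using att(2) adjacent_sym by blast
  show "adjacent Q (segment p 0 j)" "adjacent Q (segment p j ?n)"
    using segment_adjacent[OF att(3)] segment_adjacent[OF att(4)] att(1) p(3) adjacent_sym by auto
  show "adjacent {x} (segment p 0 j)"
    using att(1) by (intro adjacentI[OF x(3)]) (auto intro: segment_nth)
  show "adjacent {x} (segment p j ?n)"
    using p(3) by (intro adjacentI[OF x(4)]) (auto intro: segment_nth)
  show "adjacent (segment p 0 j) (segment p j ?n)"
    using consecutive_segments_adjacent[OF p(1)] att(1) p(3) by simp
qed

lemma K4_minor_of_three_attachments:
  assumes H: "hole V E C" and Q: "Q \<subseteq> V" "connected_set Q" "Q \<inter> C = {}"
    and xyz: "x \<in> C" "y \<in> C" "z \<in> C" "x \<noteq> y" "x \<noteq> z" "y \<noteq> z"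
    and att: "adjacent {x} Q" "adjacent {y} Q" "adjacent {z} Q"
  shows "induced_minor K4_V K4_E V E"
proof -
  obtain p where p: "induced_path p" "set p = C - {x}" "3 \<le> length p"
      and ends: "\<forall>k<length p. adj x (p!k) \<longleftrightarrow> k = 0 \<or> k = length p - 1"
    using hole_minus_vertex_path[OF H xyz(1)] .
  have "y \<in> set p" "z \<in> set p" using p(2) xyz by auto
  then obtain i j where ij: "i < length p" "p!i = y" "j < length p" "p!j = z"
    by (auto simp: in_set_conv_nth)
  have pV: "set p \<subseteq> V" using p(2) hole_subset[OF H] by auto
  have "p \<noteq> []" using p(3) by auto
  then have x: "x \<in> V" "x \<notin> set p" "adj x (p!0)" "adj x (p!(length p - 1))"
    using xyz(1) hole_subset[OF H] p(2) ends by auto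
  have Q': "Q \<inter> insert x (set p) = {}" using Q(3) p(2) xyz(1) by auto
  have "i \<noteq> j" using ij xyz(6) by auto
  then consider "i < j" | "j < i" by linarith
  then show ?thesis
  proof cases
    case 1
    show ?thesis by (rule K4_minor_of_path_attachments[OF p(1) pV ij(3) x Q(1,2) Q' 1 att(1)])
      (use ij att in simp_all)
  next
    case 2
    show ?thesis by (rule K4_minor_of_path_attachments[OF p(1) pV ij(1) x Q(1,2) Q' 2 att(1)])
      (use ij att in simp_all)
  qed
qed

lemma K23_minor_of_path_attachments:
  assumes p: "induced_path p" "set p \<subseteq> V" "0 < i" "i < length p - 1"
    and x: "x \<in> V" "x \<notin> set p" "adj x (p!0)" "adj x (p!(length p - 1))" "\<not> adj x (p!i)"
    and Q: "Q \<subseteq> V" "connected_set Q" "Q \<inter> insert x (set p) = {}"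
    and att: "adjacent {x} Q" "adjacent {p!i} Q"
    and only: "\<forall>k<length p. k \<noteq> i \<longrightarrow> \<not> adjacent {p!k} Q"
  shows "induced_minor K23_V K23_E V E"
proof (rule K23_minorI)
  let ?n = "length p" and ?S1 = "segment p 0 i" and ?S2 = "segment p (Suc i) (length p)"
  have "p!i \<in> set p" using p(4) by (intro nth_mem) linarith
  then have "p!i \<in> V" "p!i \<notin> Q" "x \<noteq> p!i" using p(2) Q(3) x(2) by auto
  moreover have "p!i \<notin> ?S1" "p!i \<notin> ?S2"
    using p induced_path_nth_eq[OF p(1)] unfolding segment_def by auto
  moreover have "x \<notin> X" "{x} \<inter> X = {}" "Q \<inter> X = {}" if "X \<subseteq> set p" for X
    using that x(2) Q(3) by blast+
  moreover note S = segment_branch_set[OF p(1,2)]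
  ultimately show "branch_sets [{x}, {p!i}, Q, ?S1, ?S2]"
    using p x Q connected_set_nonempty[OF Q(2)] connected_set_singleton segments_disjoint[OF p(1)]
    by simp
  show "adjacent {x} ?S1" using x(3) p(3) by (intro adjacentI[of x "p!0"]) (auto intro: segment_nth)
  show "adjacent {x} ?S2"
    using x(4) p(4) by (intro adjacentI[of x "p!(?n - 1)"]) (auto intro: segment_nth)
  show "adjacent {p!i} ?S1" using induced_path_adj[OF p(1), of i "i - 1"] p(3,4)
    by (intro adjacentI[of "p!i" "p!(i - 1)"]) (auto intro: segment_nth)
  show "adjacent {p!i} ?S2" using induced_path_adj[OF p(1), of i "Suc i"] p(3,4)
    by (intro adjacentI[of "p!i" "p!Suc i"]) (auto intro: segment_nth)
  show "\<not> adjacent Q ?S1" "\<not> adjacent Q ?S2"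
    using segment_not_adjacent[of 0 i p Q] segment_not_adjacent[of "Suc i" ?n p Q] only p(4)
    by (auto simp: adjacent_sym)
  show "\<not> adjacent ?S1 ?S2" using segments_not_adjacent[OF p(1)] by simp
qed (use att x(5) in simp_all)

lemma K23_minor_of_nonadjacent_attachments:
  assumes H: "hole V E C" and Q: "Q \<subseteq> V" "connected_set Q" "Q \<inter> C = {}"
    and xy: "x \<in> C" "y \<in> C" "x \<noteq> y" "\<not> adj x y"
    and att: "adjacent {x} Q" "adjacent {y} Q"
    and only: "\<forall>z\<in>C. adjacent {z} Q \<longrightarrow> z = x \<or> z = y"
  shows "induced_minor K23_V K23_E V E"
proof -
  obtain p where p: "induced_path p" "set p = C - {x}" "3 \<le> length p"
      and ends: "\<forall>k<length p. adj x (p!k) \<longleftrightarrow> k = 0 \<or> k = length p - 1"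
    using hole_minus_vertex_path[OF H xy(1)] .
  have "y \<in> set p" using p(2) xy by auto
  then obtain i where i: "i < length p" "p!i = y" by (auto simp: in_set_conv_nth)
  have "p \<noteq> []" using i(1) by auto
  show ?thesis
  proof (rule K23_minor_of_path_attachments[OF p(1) _ _ _ _ _ _ _ _ Q(1,2) _ att(1)])
    show "\<forall>k<length p. k \<noteq> i \<longrightarrow> \<not> adjacent {p!k} Q"
      using only p(2) i induced_path_nth_eq[OF p(1)] by (metis DiffE insertCI nth_mem)
  qed (use ends[rule_format, of 0] ends[rule_format, of "length p - 1"] ends i xy p(2) Q(3) att(2)
      \<open>p \<noteq> []\<close> hole_subset[OF H] in auto)
qed

lemma adjacent_segment_iff:
  assumes "\<forall>k<length p. adjacent {p!k} Z \<longleftrightarrow> P k" "j \<le> length p"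
  shows "adjacent (segment p i j) Z \<longleftrightarrow> (\<exists>k. i \<le> k \<and> k < j \<and> P k)"
proof -
  have "adjacent (segment p i j) Z \<longleftrightarrow> (\<exists>k. i \<le> k \<and> k < j \<and> adjacent {p!k} Z)"
    unfolding segment_def adjacent_def by auto
  also have "\<dots> \<longleftrightarrow> (\<exists>k. i \<le> k \<and> k < j \<and> P k)" using assms by auto
  finally show ?thesis .
qed

lemma F2_minor_of_paths:
  assumes Z: "Z \<subseteq> V" "connected_set Z"
    and A: "induced_path A" "set A \<subseteq> V" "3 \<le> length A"
    and B: "induced_path B" "set B \<subseteq> V" "3 \<le> length B"
    and disj: "Z \<inter> set A = {}" "Z \<inter> set B = {}" "set A \<inter> set B = {}"
    and attA: "\<forall>k<length A. adjacent {A!k} Z \<longleftrightarrow> k = 0 \<or> k = length A - 1"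
    and attB: "\<forall>k<length B. adjacent {B!k} Z \<longleftrightarrow> k = 0 \<or> k = length B - 1"
    and AB: "\<not> adjacent (set A) (set B)"
  shows "induced_minor F2_V F2_E V E"
proof -
  let ?a = "length A" and ?b = "length B"
  let ?A0 = "segment A 0 1" and ?A1 = "segment A 1 (?a - 1)" and ?A2 = "segment A (?a - 1) ?a"
  let ?B0 = "segment B 0 1" and ?B1 = "segment B 1 (?b - 1)" and ?B2 = "segment B (?b - 1) ?b"
  have "1 < ?a - 1" "1 < ?b - 1" using A(3) B(3) by auto
  note SA = segment_branch_set[OF A(1,2)] and SB = segment_branch_set[OF B(1,2)]
  have dA: "?A0 \<inter> ?A1 = {}" "?A0 \<inter> ?A2 = {}" "?A1 \<inter> ?A2 = {}"
    using A(3) by (simp_all add: segments_disjoint[OF A(1)])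
  have dB: "?B0 \<inter> ?B1 = {}" "?B0 \<inter> ?B2 = {}" "?B1 \<inter> ?B2 = {}"
    using B(3) by (simp_all add: segments_disjoint[OF B(1)])
  have AB': "\<not> adjacent X Y" if "X \<subseteq> set A" "Y \<subseteq> set B" for X Y
    using AB adjacent_mono that by blast
  have ZA: "adjacent Z ?A0" "adjacent ?A2 Z" "\<not> adjacent Z ?A1"
    using adjacent_segment_iff[OF attA] A(3) by (auto simp: adjacent_sym[of Z])
  have ZB: "adjacent Z ?B0" "adjacent ?B2 Z" "\<not> adjacent Z ?B1"
    using adjacent_segment_iff[OF attB] B(3) by (auto simp: adjacent_sym[of Z])
  show ?thesis
  proof (rule F2_minorI)
    show "branch_sets [Z, ?A0, ?A1, ?A2, ?B0, ?B1, ?B2]"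
    proof -
      have "Z \<inter> X = {}" if "X \<subseteq> set A" for X using that disj(1) by blast
      moreover have "Z \<inter> Y = {}" if "Y \<subseteq> set B" for Y using that disj(2) by blast
      moreover have "X \<inter> Y = {}" if "X \<subseteq> set A" "Y \<subseteq> set B" for X Y using that disj(3) by blast
      ultimately show ?thesis
        using Z connected_set_nonempty[OF Z(2)] SA SB \<open>1 < ?a - 1\<close> \<open>1 < ?b - 1\<close> dA dB by simp
    qed
    show "adjacent ?A0 ?A1" "adjacent ?A1 ?A2"
      using A(3) by (simp_all add: consecutive_segments_adjacent[OF A(1)])
    show "adjacent ?B0 ?B1" "adjacent ?B1 ?B2"
      using B(3) by (simp_all add: consecutive_segments_adjacent[OF B(1)])
    show "\<not> adjacent ?A0 ?A2" using A(3) by (simp add: segments_not_adjacent[OF A(1)])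
    show "\<not> adjacent ?B0 ?B2" using B(3) by (simp add: segments_not_adjacent[OF B(1)])
  qed (use ZA ZB SA SB \<open>1 < ?a - 1\<close> \<open>1 < ?b - 1\<close> in \<open>simp_all add: AB'\<close>)
qed

lemma F1_minor_of_paths:
  assumes Z: "Z0 \<subseteq> V" "connected_set Z0" "Z3 \<subseteq> V" "connected_set Z3" "Z0 \<inter> Z3 = {}"
      "adjacent Z0 Z3"
    and A: "induced_path A" "set A \<subseteq> V" "2 \<le> length A"
    and B: "induced_path B" "set B \<subseteq> V" "2 \<le> length B"
    and disj: "(Z0 \<union> Z3) \<inter> set A = {}" "(Z0 \<union> Z3) \<inter> set B = {}" "set A \<inter> set B = {}"
    and attA: "\<forall>k<length A. adjacent {A!k} Z0 \<longleftrightarrow> k = length A - 1"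
      "\<forall>k<length A. adjacent {A!k} Z3 \<longleftrightarrow> k = 0"
    and attB: "\<forall>k<length B. adjacent {B!k} Z0 \<longleftrightarrow> k = length B - 1"
      "\<forall>k<length B. adjacent {B!k} Z3 \<longleftrightarrow> k = 0"
    and AB: "\<not> adjacent (set A) (set B)"
  shows "induced_minor F1_V F1_E V E"
proof -
  let ?a = "length A" and ?b = "length B"
  let ?A0 = "segment A 0 1" and ?A1 = "segment A 1 ?a"
  let ?B0 = "segment B 0 1" and ?B1 = "segment B 1 ?b"
  note SA = segment_branch_set[OF A(1,2)] and SB = segment_branch_set[OF B(1,2)]
  have dA: "?A1 \<inter> ?A0 = {}" and dB: "?B0 \<inter> ?B1 = {}"
    using segments_disjoint[OF A(1), of 1 1 ?a 0] segments_disjoint[OF B(1), of 1 1 ?b 0] by auto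
  have AB': "\<not> adjacent X Y" if "X \<subseteq> set A" "Y \<subseteq> set B" for X Y
    using AB adjacent_mono that by blast
  have ZA: "adjacent Z0 ?A1" "\<not> adjacent Z0 ?A0" "adjacent ?A0 Z3" "\<not> adjacent ?A1 Z3"
    using adjacent_segment_iff[OF attA(1)] adjacent_segment_iff[OF attA(2)] A(3)
    by (auto simp: adjacent_sym[of Z0])
  have ZB: "adjacent ?B1 Z0" "\<not> adjacent Z0 ?B0" "adjacent Z3 ?B0" "\<not> adjacent Z3 ?B1"
    using adjacent_segment_iff[OF attB(1)] adjacent_segment_iff[OF attB(2)] B(3)
    by (auto simp: adjacent_sym[of Z0] adjacent_sym[of Z3])
  show ?thesis
  proof (rule F1_minorI)
    show "branch_sets [Z0, ?A1, ?A0, Z3, ?B0, ?B1]"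
    proof -
      have "Z0 \<inter> X = {}" "X \<inter> Z3 = {}" if "X \<subseteq> set A" for X using that disj(1) by blast+
      moreover have "Z0 \<inter> Y = {}" "Z3 \<inter> Y = {}" if "Y \<subseteq> set B" for Y using that disj(2) by blast+
      moreover have "X \<inter> Y = {}" if "X \<subseteq> set A" "Y \<subseteq> set B" for X Y using that disj(3) by blast
      ultimately show ?thesis
        using Z connected_set_nonempty[OF Z(2)] connected_set_nonempty[OF Z(4)] SA SB A(3) B(3)
          dA dB
        by simp
    qed
    show "adjacent ?A1 ?A0"
      using consecutive_segments_adjacent[OF A(1), of 0 1 ?a] A(3) adjacent_sym by auto
    show "adjacent ?B0 ?B1" using consecutive_segments_adjacent[OF B(1), of 0 1 ?b] B(3) by auto
  qed (use ZA ZB Z SA SB A(3) B(3) in \<open>simp_all add: AB'\<close>)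
qed

lemma path_attachments_iff:
  assumes "z \<in> Z" "\<forall>a\<in>set p. adjacent {a} Z \<longrightarrow> adj z a"
  shows "\<forall>k<length p. adjacent {p!k} Z \<longleftrightarrow> adj z (p!k)"
proof (intro allI impI)
  fix k assume "k < length p"
  then show "adjacent {p!k} Z \<longleftrightarrow> adj z (p!k)"
    using assms adjacentI[of "p!k" z "{p!k}" Z] adj_sym by auto
qed

lemma F2_minor_of_holes:
  assumes H1: "hole V E C1" and H2: "hole V E C2" and uw: "u \<in> C1" "w \<in> C2"
    and Z: "Z \<subseteq> V" "connected_set Z" "u \<in> Z" "w \<in> Z"
    and disj: "Z \<inter> (C1 - {u}) = {}" "Z \<inter> (C2 - {w}) = {}" "(C1 - {u}) \<inter> (C2 - {w}) = {}"
    and att1: "\<forall>a\<in>C1 - {u}. adjacent {a} Z \<longrightarrow> adj u a"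
    and att2: "\<forall>b\<in>C2 - {w}. adjacent {b} Z \<longrightarrow> adj w b"
    and no_edge: "\<not> adjacent (C1 - {u}) (C2 - {w})"
  shows "induced_minor F2_V F2_E V E"
proof -
  obtain A where A: "induced_path A" "set A = C1 - {u}" "3 \<le> length A"
      "\<forall>k<length A. adj u (A!k) \<longleftrightarrow> k = 0 \<or> k = length A - 1"
    using hole_minus_vertex_path[OF H1 uw(1)] .
  obtain B where B: "induced_path B" "set B = C2 - {w}" "3 \<le> length B"
      "\<forall>k<length B. adj w (B!k) \<longleftrightarrow> k = 0 \<or> k = length B - 1"
    using hole_minus_vertex_path[OF H2 uw(2)] .
  show ?thesis
  proof (rule F2_minor_of_paths[OF Z(1,2) A(1) _ A(3) B(1) _ B(3)])
    show "set A \<subseteq> V" "set B \<subseteq> V" using A(2) B(2) hole_subset[OF H1] hole_subset[OF H2] by auto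
    show "\<forall>k<length A. adjacent {A!k} Z \<longleftrightarrow> k = 0 \<or> k = length A - 1"
      using path_attachments_iff[OF Z(3), of A] att1 A(2,4) by simp
    show "\<forall>k<length B. adjacent {B!k} Z \<longleftrightarrow> k = 0 \<or> k = length B - 1"
      using path_attachments_iff[OF Z(4), of B] att2 B(2,4) by simp
  qed (use A(2) B(2) disj no_edge in auto)
qed

(* With c = q the two holes share the edge vc; otherwise they share v and are joined by cq. *)
lemma F1_minor_of_holes:
  assumes H1: "hole V E C1" and H2: "hole V E C2"
    and v: "v \<in> C1" "v \<in> C2" and cq: "c \<in> C1" "q \<in> C2" "adj v c" "adj v q" "c = q \<or> adj c q"
    and disj: "(C1 - {v, c}) \<inter> C2 = {}" "(C2 - {v, q}) \<inter> C1 = {}"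
    and att1: "\<forall>a\<in>C1 - {v, c}. adjacent {a} {c, q} \<longrightarrow> adj c a"
    and att2: "\<forall>b\<in>C2 - {v, q}. adjacent {b} {c, q} \<longrightarrow> adj q b"
    and no_edge: "\<not> adjacent (C1 - {v, c}) (C2 - {v, q})"
  shows "induced_minor F1_V F1_E V E"
proof -
  obtain A where A: "induced_path A" "set A = C1 - {v, c}" "2 \<le> length A"
      "\<forall>k<length A. adj v (A!k) \<longleftrightarrow> k = length A - 1" "\<forall>k<length A. adj c (A!k) \<longleftrightarrow> k = 0"
    using hole_minus_edge_path[OF H1 v(1) cq(1,3)] .
  obtain B where B: "induced_path B" "set B = C2 - {v, q}" "2 \<le> length B"
      "\<forall>k<length B. adj v (B!k) \<longleftrightarrow> k = length B - 1" "\<forall>k<length B. adj q (B!k) \<longleftrightarrow> k = 0"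
    using hole_minus_edge_path[OF H2 v(2) cq(2,4)] .
  have CV: "C1 \<subseteq> V" "C2 \<subseteq> V" using hole_subset H1 H2 by auto
  show ?thesis
  proof (rule F1_minor_of_paths[of "{v}" "{c, q}" A B])
    show "connected_set {c, q}" using cq(5) connected_set_edge connected_set_singleton by auto
    show "\<forall>k<length A. adjacent {A!k} {c, q} \<longleftrightarrow> k = 0"
      using path_attachments_iff[of c "{c, q}" A] att1 A(2,5) by simp
    show "\<forall>k<length B. adjacent {B!k} {c, q} \<longleftrightarrow> k = 0"
      using path_attachments_iff[of q "{c, q}" B] att2 B(2,5) by simp
    show "\<forall>k<length A. adjacent {A!k} {v} \<longleftrightarrow> k = length A - 1"
      using A(4) adj_sym by simp
    show "\<forall>k<length B. adjacent {B!k} {v} \<longleftrightarrow> k = length B - 1"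
      using B(4) adj_sym by simp
    show "({v} \<union> {c, q}) \<inter> set A = {}" "({v} \<union> {c, q}) \<inter> set B = {}" "set A \<inter> set B = {}"
      using A(2) B(2) cq(1,2) disj by auto
    show "{v} \<inter> {c, q} = {}" using cq(3,4) by auto
    show "adjacent {v} {c, q}" using cq(3) by (auto simp: adjacent_singleton_left)
    show "\<not> adjacent (set A) (set B)" using A(2) B(2) no_edge by simp
  qed (use A B cq v CV connected_set_singleton in auto)
qed

lemma hole_of_induced_4_cycle:
  assumes V: "{a, b, c, d} \<subseteq> V" and dist: "distinct [a, b, c, d]"
    and e: "adj a b" "adj b c" "adj c d" "adj d a" and ne: "\<not> adj a c" "\<not> adj b d"
  shows "hole V E {a, b, c, d}"
proof -
  let ?C = "{a, b, c, d}"
  have "connected_set ({a, b} \<union> {c} \<union> {d})"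
    using e by (intro connected_set_Un connected_set_edge connected_set_singleton)
      (auto simp: adjacent_def)
  moreover have "{a, b} \<union> {c} \<union> {d} = ?C" by auto
  ultimately have conn: "connected_graph ?C (induced_edges E ?C)"
    unfolding connected_set_def by simp
  have nbrs: "{u\<in>?C. adj u x} = (if x = a \<or> x = c then {b, d} else {a, c})" if "x \<in> ?C" for x
    using that dist e ne adj_sym by auto
  have "degree (induced_edges E ?C) x = 2" if "x \<in> ?C" for x
  proof -
    have "{u. {u, x} \<in> induced_edges E ?C} = {u\<in>?C. adj u x}"
      using that unfolding induced_edges_def adj_def by auto
    then show ?thesis unfolding degree_def using nbrs[OF that] dist by auto
  qed
  then show ?thesis unfolding hole_def cycle_graph_def using V dist conn by auto
qed

lemma connected_reachable_set:
  assumes "s \<in> W"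
  shows "connected_set {z. (s, z) \<in> (adj_within W)\<^sup>*}" "{z. (s, z) \<in> (adj_within W)\<^sup>*} \<subseteq> W"
proof -
  let ?K = "{z. (s, z) \<in> (adj_within W)\<^sup>*}"
  have "(s, z) \<in> (adj_within W)\<^sup>* \<Longrightarrow> z \<in> W \<and> (s, z) \<in> (adj_within ?K)\<^sup>*" for z
  proof (induction rule: rtrancl_induct)
    case (step y z)
    then have "(y, z) \<in> adj_within ?K" using rtrancl_into_rtrancl[OF step(1,2)]
      unfolding adj_within_def by blast
    then show ?case using step unfolding adj_within_def by (auto intro: rtrancl_into_rtrancl)
  qed (use assms in simp)
  then show "connected_set ?K" "?K \<subseteq> W" by (auto intro: connected_setI[of s])
qed

lemma connecting_set_exists:
  assumes G: "connected_graph V E" and C: "C1 \<subseteq> V" "C2 \<subseteq> V" "C1 \<noteq> {}" "C2 \<noteq> {}" "C1 \<inter> C2 = {}"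
    and no_edge: "\<not> adjacent C1 C2"
  obtains Q u w where "Q \<subseteq> V - (C1 \<union> C2)" "connected_set Q" "u \<in> C1" "w \<in> C2"
    "adjacent {u} Q" "adjacent {w} Q"
proof -
  let ?W = "V - (C1 \<union> C2)"
  define S where "S = {z. \<exists>s\<in>?W. adjacent C1 {s} \<and> (s, z) \<in> (adj_within ?W)\<^sup>*}"
  have SW: "S \<subseteq> ?W" unfolding S_def using connected_reachable_set(2)[of _ ?W] by blast
  obtain t w0 where t: "t \<in> C1" and w0: "w0 \<in> C2" using C by blast
  have "w0 \<in> V - (C1 \<union> S)" using w0 C SW by auto
  then obtain x y where xy: "x \<in> C1 \<union> S" "y \<in> V - (C1 \<union> S)" "adj x y"
    using connected_graph_cut_edge[OF G, of "C1 \<union> S" t w0] t C(1) SW unfolding adj_def by auto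
  have "x \<notin> C1"
  proof
    assume "x \<in> C1"
    then have "y \<in> ?W" "adjacent C1 {y}"
      using xy no_edge adjacentI[OF xy(3), of C1 "{y}"] adjacentI[OF xy(3), of C1 C2] by auto
    then have "y \<in> S" unfolding S_def by blast
    then show False using xy(2) by blast
  qed
  then obtain s where s: "s \<in> ?W" "adjacent C1 {s}" "(s, x) \<in> (adj_within ?W)\<^sup>*"
    using xy(1) unfolding S_def by blast
  have "y \<in> C2"
  proof (rule ccontr)
    assume "y \<notin> C2"
    then have "(x, y) \<in> adj_within ?W" using xy SW \<open>x \<notin> C1\<close> unfolding adj_within_def by auto
    then have "y \<in> S" unfolding S_def using s rtrancl_into_rtrancl[OF s(3)] by blast
    then show False using xy(2) by blast
  qed
  let ?Q = "{z. (s, z) \<in> (adj_within ?W)\<^sup>*}"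
  obtain u where u: "u \<in> C1" "adj u s" using s(2) unfolding adjacent_def by blast
  show ?thesis
  proof (rule that[of ?Q u y])
    show "adjacent {u} ?Q" using adjacentI[OF u(2)] by simp
    show "adjacent {y} ?Q" using adjacentI[of y x] xy(3) s(3) adj_sym by simp
  qed (use connected_reachable_set[OF s(1)] u(1) \<open>y \<in> C2\<close> in auto)
qed

end

locale minor_free_graph = simple_graph +
  assumes no_K4: "\<not> induced_minor K4_V K4_E V E"
    and no_K23: "\<not> induced_minor K23_V K23_E V E"
    and no_F1: "\<not> induced_minor F1_V F1_E V E"
    and no_F2: "\<not> induced_minor F2_V F2_E V E"
begin

lemma attachments_at_most_two:
  assumes H: "hole V E C" and Q: "Q \<subseteq> V" "connected_set Q" "Q \<inter> C = {}"
    and xy: "x \<in> C" "y \<in> C" "x \<noteq> y" "adjacent {x} Q" "adjacent {y} Q"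
    and z: "z \<in> C" "adjacent {z} Q"
  shows "z = x \<or> z = y"
  using K4_minor_of_three_attachments[OF H Q xy(1,2) z(1) xy(3) _ _ xy(4,5) z(2)] no_K4 by blast

lemma attachments_adjacent:
  assumes H: "hole V E C" and Q: "Q \<subseteq> V" "connected_set Q" "Q \<inter> C = {}"
    and xy: "x \<in> C" "y \<in> C" "x \<noteq> y" "adjacent {x} Q" "adjacent {y} Q"
  shows "adj x y"
proof (rule ccontr)
  assume "\<not> adj x y"
  moreover have "\<forall>z\<in>C. adjacent {z} Q \<longrightarrow> z = x \<or> z = y"
    using attachments_at_most_two[OF H Q xy] by blast
  ultimately show False
    using K23_minor_of_nonadjacent_attachments[OF H Q xy(1-3) _ xy(4,5)] no_K23 by blast
qed

lemma attachments_to_hole_minus_vertex: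
  assumes H1: "hole V E C1" and H2: "hole V E C2" and v: "C1 \<inter> C2 = {v}"
    and c: "c \<in> C1" "c \<noteq> v" "adjacent {c} (C2 - {v})"
  shows "adj v c" "\<forall>a\<in>C1. adjacent {a} (C2 - {v}) \<longrightarrow> a = v \<or> a = c"
proof -
  have Q: "C2 - {v} \<subseteq> V" "connected_set (C2 - {v})" "(C2 - {v}) \<inter> C1 = {}"
    using hole_subset[OF H2] connected_hole_minus_vertex[OF H2] v by auto
  obtain d where "d \<in> C2" "adj v d" using hole_has_neighbour[OF H2] v by blast
  then have "adjacent {v} (C2 - {v})" by (auto intro: adjacentI)
  then show "adj v c" "\<forall>a\<in>C1. adjacent {a} (C2 - {v}) \<longrightarrow> a = v \<or> a = c"
    using attachments_adjacent[OF H1 Q _ c(1) _ _ c(3)]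
      attachments_at_most_two[OF H1 Q _ c(1) _ _ c(3)]
      v c(2) by blast+
qed

lemma holes_meeting_in_vertex:
  assumes H1: "hole V E C1" and H2: "hole V E C2" and v: "C1 \<inter> C2 = {v}"
  shows False
proof (cases "adjacent (C1 - {v}) (C2 - {v})")
  case True
  then obtain c q where cq: "c \<in> C1 - {v}" "q \<in> C2 - {v}" "adj c q" unfolding adjacent_def by blast
  have "adjacent {c} (C2 - {v})" "adjacent {q} (C1 - {v})"
    using cq adj_sym by (auto intro: adjacentI)
  then have c: "adj v c" "\<forall>a\<in>C1. adjacent {a} (C2 - {v}) \<longrightarrow> a = v \<or> a = c"
    and q: "adj v q" "\<forall>b\<in>C2. adjacent {b} (C1 - {v}) \<longrightarrow> b = v \<or> b = q"
    using attachments_to_hole_minus_vertex[OF H1 H2 v]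
      attachments_to_hole_minus_vertex[OF H2 H1] v cq
    by (auto simp: Int_commute)
  have "induced_minor F1_V F1_E V E"
  proof (rule F1_minor_of_holes[OF H1 H2 _ _ _ _ c(1) q(1)])
    show "\<forall>a\<in>C1 - {v, c}. adjacent {a} {c, q} \<longrightarrow> adj c a"
      using c(2) cq adj_sym by (auto simp: adjacent_singleton_left intro: adjacentI)
    show "\<forall>b\<in>C2 - {v, q}. adjacent {b} {c, q} \<longrightarrow> adj q b"
      using q(2) cq adj_sym by (auto simp: adjacent_singleton_left intro: adjacentI)
    show "\<not> adjacent (C1 - {v, c}) (C2 - {v, q})"
      using c(2) unfolding adjacent_def by (blast intro: adjacentI)
  qed (use v cq in auto)
  then show False using no_F1 by blast
next
  case False
  have "induced_minor F2_V F2_E V E"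
    by (rule F2_minor_of_holes[OF H1 H2, of v v "{v}"])
      (use v False hole_subset[OF H1] connected_set_singleton adj_sym in auto)
  then show False using no_F2 by blast
qed

lemma holes_meeting_in_edge:
  assumes H1: "hole V E C1" and H2: "hole V E C2" and xb: "C1 \<inter> C2 = {x, b}" "adj x b"
  shows False
proof -
  have x: "x \<in> C1" "x \<in> C2" and b: "b \<in> C1" "b \<in> C2" using xb(1) by auto
  obtain B where B: "induced_path B" "set B = C2 - {x, b}" "2 \<le> length B"
      "\<forall>k<length B. adj x (B!k) \<longleftrightarrow> k = length B - 1" "\<forall>k<length B. adj b (B!k) \<longleftrightarrow> k = 0"
    using hole_minus_edge_path[OF H2 x(2) b(2) xb(2)] .
  have "B \<noteq> []" using B(3) by auto
  then have Q: "C2 - {x, b} \<subseteq> V" "connected_set (C2 - {x, b})" "(C2 - {x, b}) \<inter> C1 = {}"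
    using hole_subset[OF H2] connected_set_path[OF B(1)] B(2) xb(1) by auto
  have "length B - 1 < length B" "0 < length B" using B(3) by auto
  then have "adj x (B!(length B - 1))" "adj b (B!0)" "B!(length B - 1) \<in> set B" "B!0 \<in> set B"
    using B(4,5) by auto
  then have "adjacent {x} (C2 - {x, b})" "adjacent {b} (C2 - {x, b})"
    using adjacentI[of x "B!(length B - 1)"] adjacentI[of b "B!0"] B(2) by auto
  then have "\<forall>a\<in>C1. adjacent {a} (C2 - {x, b}) \<longrightarrow> a = x \<or> a = b"
    using attachments_at_most_two[OF H1 Q x(1) b(1)] adj_irrefl xb(2) by metis
  then have "induced_minor F1_V F1_E V E"
    using xb adj_sym by (intro F1_minor_of_holes[OF H1 H2 x b(1) b(2)]) (auto simp: adjacent_def)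
  then show False using no_F1 by blast
qed

lemma path_first_return_adjacent:
  assumes H: "hole V E C" and x: "x \<in> C" "x \<notin> set p" "adj x (p!0)"
    and p: "induced_path p" "set p \<subseteq> V"
    and j: "0 < j" "j < length p" "p!j \<in> C" "\<forall>k<j. p!k \<notin> C"
  shows "adj x (p!j)"
proof -
  let ?Q = "segment p 0 j"
  have Q: "?Q \<subseteq> V" "connected_set ?Q" "?Q \<inter> C = {}"
    using segment_subset[of j p 0] j p connected_segment[OF p(1), of 0 j]
    unfolding segment_def by auto
  have "adj (p!j) (p!(j - 1))" using induced_path_adj[OF p(1), of j "j - 1"] j(1,2) by simp
  then have "adjacent {x} ?Q" "adjacent {p!j} ?Q"
    using adjacentI[of x "p!0" "{x}" ?Q] adjacentI[of "p!j" "p!(j - 1)" "{p!j}" ?Q]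
      segment_nth[of 0 0 j p] segment_nth[of 0 "j - 1" j p] x(3) j(1) by auto
  moreover have "x \<noteq> p!j" using x(2) j(2) nth_mem by fastforce
  ultimately show ?thesis using attachments_adjacent[OF H Q x(1) j(3)] by blast
qed

lemma overlapping_holes_intersection:
  assumes H1: "hole V E C1" and H2: "hole V E C2"
    and x: "x \<in> C1" "x \<in> C2" and y: "y \<in> C2" "y \<notin> C1" "adj x y"
  shows "C1 \<inter> C2 = {x} \<or> (\<exists>b. adj x b \<and> C1 \<inter> C2 = {x, b})"
proof -
  obtain p where p: "induced_path p" "set p = C2 - {x}" "3 \<le> length p" "p!0 = y"
      and ends: "\<forall>k<length p. adj x (p!k) \<longleftrightarrow> k = 0 \<or> k = length p - 1"
    using hole_minus_vertex_path_from[OF H2 x(2) y(1,3)] .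
  let ?n = "length p"
  show ?thesis
  proof (cases "\<exists>k<?n. p!k \<in> C1")
    case False
    then have "set p \<inter> C1 = {}" by (auto simp: in_set_conv_nth)
    then show ?thesis using p(2) x by auto
  next
    case True
    define j where "j = (LEAST k. k < ?n \<and> p!k \<in> C1)"
    have j: "j < ?n" "p!j \<in> C1" using LeastI_ex[OF True] unfolding j_def by blast+
    have before: "\<forall>k<j. p!k \<notin> C1"
      using not_less_Least[of _ "\<lambda>k. k < ?n \<and> p!k \<in> C1"] j(1) unfolding j_def
      by (meson order.strict_trans)
    have "j \<noteq> 0" using j(2) p(4) y(2) by (cases j) auto
    moreover have "x \<notin> set p" "adj x (p!0)" "set p \<subseteq> V"
      using p(2,4) y(3) hole_subset[OF H2] by auto
    ultimately have "adj x (p!j)"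
      using path_first_return_adjacent[OF H1 x(1) _ _ p(1) _ _ j before] by blast
    then have "Suc j = ?n" using ends j(1) \<open>j \<noteq> 0\<close> by auto
    then have "set p = segment p 0 (Suc j)" using segment_all[of p] by simp
    also have "\<dots> = insert (p!j) (segment p 0 j)" unfolding segment_def
      by (simp add: atLeast0_lessThan_Suc)
    finally have "C2 = insert x (insert (p!j) (segment p 0 j))" using p(2) x(2) by blast
    moreover have "segment p 0 j \<inter> C1 = {}" using before unfolding segment_def by auto
    ultimately show ?thesis using \<open>adj x (p!j)\<close> x j(2) by blast
  qed
qed

lemma attachments_to_disjoint_hole:
  assumes H1: "hole V E C1" and H2: "hole V E C2" and disj: "C1 \<inter> C2 = {}"
    and u: "u \<in> C1" "adjacent {u} C2"
  shows "\<forall>a\<in>C1. adjacent {a} C2 \<longrightarrow> a = u \<or> adj u a"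
  using attachments_adjacent[OF H1 hole_subset[OF H2] connected_hole[OF H2] _ u(1) _ _ u(2)] disj
  by (auto simp: Int_commute)

lemma holes_joined_at_one_edge:
  assumes H1: "hole V E C1" and H2: "hole V E C2" and disj: "C1 \<inter> C2 = {}"
    and uw: "u \<in> C1" "w \<in> C2" "adj u w"
    and only: "\<forall>a\<in>C1. \<forall>b\<in>C2. adj a b \<longrightarrow> a = u \<or> b = w"
  shows False
proof -
  have "adjacent {u} C2" "adjacent {w} C1" using uw adj_sym by (auto intro: adjacentI)
  then have att: "\<forall>a\<in>C1. adjacent {a} C2 \<longrightarrow> a = u \<or> adj u a"
      "\<forall>b\<in>C2. adjacent {b} C1 \<longrightarrow> b = w \<or> adj w b"
    using attachments_to_disjoint_hole[OF H1 H2 disj uw(1)]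
      attachments_to_disjoint_hole[OF H2 H1 _ uw(2)] disj by (auto simp: Int_commute)
  have "induced_minor F2_V F2_E V E"
  proof (rule F2_minor_of_holes[OF H1 H2 uw(1,2)])
    show "\<forall>a\<in>C1 - {u}. adjacent {a} {u, w} \<longrightarrow> adj u a"
      using att(1) uw adj_sym by (auto simp: adjacent_singleton_left intro: adjacentI)
    show "\<forall>b\<in>C2 - {w}. adjacent {b} {u, w} \<longrightarrow> adj w b"
      using att(2) uw adj_sym by (auto simp: adjacent_singleton_left intro: adjacentI)
    show "\<not> adjacent (C1 - {u}) (C2 - {w})" using only unfolding adjacent_def by blast
  qed (use uw disj hole_subset[OF H1] hole_subset[OF H2] connected_set_edge in auto)
  then show False using no_F2 by blast
qed

lemma disjoint_holes_joined_by_two_edges: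
  assumes H1: "hole V E C1" and H2: "hole V E C2" and disj: "C1 \<inter> C2 = {}"
    and ux: "u \<in> C1" "x \<in> C1" "adj u x" and wy: "w \<in> C2" "y \<in> C2" "adj w y"
    and uw: "adj u w" and xy: "adj x y"
    and edges: "\<forall>a\<in>C1. \<forall>b\<in>C2. adj a b \<longrightarrow> (a = u \<or> a = x) \<and> (b = w \<or> b = y)"
  shows False
proof -
  consider "adj u y" "adj x w" | "adj u y" "\<not> adj x w" | "\<not> adj u y" "adj x w"
    | "\<not> adj u y" "\<not> adj x w" by blast
  then show False
  proof cases
    case 1
    have "distinct [u, x, w, y]" using ux wy disj by auto
    then have "induced_minor K4_V K4_E V E"
      using 1 ux wy uw xy hole_subset[OF H1] hole_subset[OF H2]
      by (intro K4_minorI[of "{u}" "{x}" "{w}" "{y}"]) (auto simp: connected_set_singleton)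
    then show False using no_K4 by blast
  next
    case 2
    then show False using holes_joined_at_one_edge[OF H1 H2 disj ux(1) wy(2)] edges by blast
  next
    case 3
    then show False using holes_joined_at_one_edge[OF H1 H2 disj ux(2) wy(1)] edges by blast
  next
    case 4
    have "hole V E {u, x, y, w}"
      using 4 ux wy uw xy disj hole_subset[OF H1] hole_subset[OF H2] adj_sym
      by (intro hole_of_induced_4_cycle) auto
    moreover have "C1 \<inter> {u, x, y, w} = {u, x}" using ux wy disj by auto
    ultimately show False using holes_meeting_in_edge[OF H1] ux(3) by blast
  qed
qed

lemma adjacent_disjoint_holes:
  assumes H1: "hole V E C1" and H2: "hole V E C2" and disj: "C1 \<inter> C2 = {}"
    and adjacent: "adjacent C1 C2"
  shows False
proof -
  obtain u w where uw: "u \<in> C1" "w \<in> C2" "adj u w" using adjacent unfolding adjacent_def by blast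
  show False
  proof (cases "\<forall>a\<in>C1. \<forall>b\<in>C2. adj a b \<longrightarrow> a = u \<or> b = w")
    case True
    then show False using holes_joined_at_one_edge[OF H1 H2 disj uw] by blast
  next
    case False
    then obtain x y where xy: "x \<in> C1" "y \<in> C2" "adj x y" "x \<noteq> u" "y \<noteq> w" by blast
    have Q1: "C2 \<subseteq> V" "connected_set C2" "C2 \<inter> C1 = {}"
      and Q2: "C1 \<subseteq> V" "connected_set C1" "C1 \<inter> C2 = {}"
      using hole_subset connected_hole H1 H2 disj by auto
    have att: "adjacent {u} C2" "adjacent {x} C2" "adjacent {w} C1" "adjacent {y} C1"
      using uw xy adj_sym by (auto intro: adjacentI)
    have "adj u x" "adj w y"
      using attachments_adjacent[OF H1 Q1 uw(1) xy(1)] attachments_adjacent[OF H2 Q2 uw(2) xy(2)]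
        att xy(4,5) by auto
    moreover have "(a = u \<or> a = x) \<and> (b = w \<or> b = y)" if "a \<in> C1" "b \<in> C2" "adj a b" for a b
    proof -
      have "adjacent {a} C2" "adjacent {b} C1" using that adj_sym by (auto intro: adjacentI)
      then show ?thesis
        using attachments_at_most_two[OF H1 Q1 uw(1) xy(1) _ att(1,2)]
          attachments_at_most_two[OF H2 Q2 uw(2) xy(2) _ att(3,4)] that xy(4,5) by blast
    qed
    ultimately show False
      using disjoint_holes_joined_by_two_edges[OF H1 H2 disj uw(1) xy(1) _ uw(2) xy(2)] uw xy
      by blast
  qed
qed

lemma nonadjacent_disjoint_holes:
  assumes G: "connected_graph V E" and H1: "hole V E C1" and H2: "hole V E C2"
    and disj: "C1 \<inter> C2 = {}" and no_edge: "\<not> adjacent C1 C2"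
  shows False
proof -
  have "C1 \<noteq> {}" "C2 \<noteq> {}" using hole_card[OF H1] hole_card[OF H2] by auto
  then obtain Q u w where Q: "Q \<subseteq> V - (C1 \<union> C2)" "connected_set Q"
      and uw: "u \<in> C1" "w \<in> C2" "adjacent {u} Q" "adjacent {w} Q"
    using connecting_set_exists[OF G hole_subset[OF H1] hole_subset[OF H2] _ _ disj no_edge]
    by metis
  let ?Z = "{u} \<union> Q \<union> {w}"
  have "connected_set ({u} \<union> Q)"
    using uw(3) by (intro connected_set_Un connected_set_singleton Q(2))
  moreover have "adjacent ({u} \<union> Q) {w}" using uw(4) adj_sym unfolding adjacent_def by blast
  ultimately have Z: "connected_set ?Z" using connected_set_Un connected_set_singleton by blast
  have Q1: "Q \<subseteq> V" "Q \<inter> C1 = {}" and Q2: "Q \<inter> C2 = {}" using Q(1) by auto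
  have "induced_minor F2_V F2_E V E"
  proof (rule F2_minor_of_holes[OF H1 H2 uw(1,2) _ Z])
    show "\<forall>a\<in>C1 - {u}. adjacent {a} ?Z \<longrightarrow> adj u a"
    proof (intro ballI impI)
      fix a assume a: "a \<in> C1 - {u}" "adjacent {a} ?Z"
      have "\<not> adj a w" using no_edge a(1) uw(2) by (auto intro: adjacentI)
      then have "adj a u \<or> adjacent {a} Q" using a(2) unfolding adjacent_def by auto
      then show "adj u a"
        using attachments_adjacent[OF H1 Q1(1) Q(2) Q1(2) uw(1)] a(1) uw(3) adj_sym
        by auto
    qed
    show "\<forall>b\<in>C2 - {w}. adjacent {b} ?Z \<longrightarrow> adj w b"
    proof (intro ballI impI)
      fix b assume b: "b \<in> C2 - {w}" "adjacent {b} ?Z"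
      have "\<not> adj b u" using no_edge b(1) uw(1) adj_sym by (auto intro: adjacentI)
      then have "adj b w \<or> adjacent {b} Q" using b(2) unfolding adjacent_def by auto
      then show "adj w b" using attachments_adjacent[OF H2 Q1(1) Q(2) Q2 uw(2)] b(1) uw(4) adj_sym
        by auto
    qed
  qed (use Q uw disj no_edge hole_subset[OF H1] hole_subset[OF H2] in \<open>auto simp: adjacent_def\<close>)
  then show False using no_F2 by blast
qed

lemma overlapping_holes_nested:
  assumes H1: "hole V E C1" and H2: "hole V E C2" and meet: "C1 \<inter> C2 \<noteq> {}"
  shows "C2 \<subseteq> C1"
proof (rule ccontr)
  assume "\<not> C2 \<subseteq> C1"
  then obtain w where "w \<in> C2 - (C1 \<inter> C2)" by blast
  moreover obtain t where "t \<in> C1 \<inter> C2" using meet by blast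
  moreover have "connected_graph C2 (induced_edges E C2)"
    using H2 unfolding hole_def cycle_graph_def by blast
  ultimately obtain x y where "x \<in> C1 \<inter> C2" "y \<in> C2 - (C1 \<inter> C2)" "adj x y"
    using connected_graph_cut_edge[of C2 _ "C1 \<inter> C2" t w]
    unfolding induced_edges_def adj_def by blast
  then have "C1 \<inter> C2 = {x} \<or> (\<exists>b. adj x b \<and> C1 \<inter> C2 = {x, b})"
    using overlapping_holes_intersection[OF H1 H2] by blast
  then show False using holes_meeting_in_vertex[OF H1 H2] holes_meeting_in_edge[OF H1 H2] by blast
qed

theorem holes_unique:
  assumes "connected_graph V E" "hole V E C1" "hole V E C2"
  shows "C1 = C2"
proof (cases "C1 \<inter> C2 = {}")
  case True
  then show ?thesis using adjacent_disjoint_holes nonadjacent_disjoint_holes assms by blast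
next
  case False
  then show ?thesis using overlapping_holes_nested assms by (metis Int_commute subset_antisym)
qed

end

theorem lemma4p5:
  fixes V :: "'a set" and E :: "'a set set"
  assumes "graph V E"
    and "connected_graph V E"
    and "\<not> induced_minor K4_V K4_E V E"
    and "\<not> induced_minor K23_V K23_E V E"
    and "\<not> induced_minor F1_V F1_E V E"
    and "\<not> induced_minor F2_V F2_E V E"
  shows "\<forall>C1 C2. hole V E C1 \<and> hole V E C2 \<longrightarrow> C1 = C2"
proof -
  interpret minor_free_graph V E
    using assms by unfold_locales
  show ?thesis using holes_unique[OF assms(2)] by blast
qed

end
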